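(* Suppose $D$ is finite. Then the dimension of $\mathcal{A}(D)/\mathcal{V}(D)$ equals the $\mathbb{F}_2$-rank of the adjacency matrix of the collinearity graph of the Fischer space $\Pi(D)$.
   Context: Let $D$ be a class of $3$-transpositions generating a group $G$ (a conjugacy class of involutions with $o(de)\in\{1,2,3\}$ for $d,e\in D$). $\Pi(D)$ has point set $D$ and lines the triples $\{d,e,d^e\}$ with $d,e$ non-commuting; its collinearity graph joins distinct collinear (i.e., non-commuting) points. $\mathcal{A}(D)$ is the $\mathbb{F}_2$-space with basis $D$ and bilinear product $d*e=d+e+f$ if $\{d,e,f\}$ is a line, $0$ otherwise; the form $\langle d,e\rangle$ is $1$ if $d,e$ do not commute and $0$ otherwise; $\mathcal{V}(D)$ is its radical. *)

theory Defs
  imports "HOL-Algebra.Algebra" "HOL-Library.Z2" "HOL-Library.Function_Algebras"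
begin

definition conj_class :: "('g, 'b) monoid_scheme \<Rightarrow> 'g \<Rightarrow> 'g set" where
  "conj_class G a = {inv\<^bsub>G\<^esub> g \<otimes>\<^bsub>G\<^esub> a \<otimes>\<^bsub>G\<^esub> g | g. g \<in> carrier G}"

definition three_transp_class :: "('g, 'b) monoid_scheme \<Rightarrow> 'g set \<Rightarrow> bool" where
  "three_transp_class G D \<longleftrightarrow>
     group G \<and>
     (\<exists>a \<in> carrier G. D = conj_class G a) \<and>
     (\<forall>d \<in> D. d \<noteq> \<one>\<^bsub>G\<^esub> \<and> d \<otimes>\<^bsub>G\<^esub> d = \<one>\<^bsub>G\<^esub>) \<and>
     (\<forall>d \<in> D. \<forall>e \<in> D. group.ord G (d \<otimes>\<^bsub>G\<^esub> e) \<in> {1, 2, 3}) \<and>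
     generate G D = carrier G"

definition commute :: "('g, 'b) monoid_scheme \<Rightarrow> 'g \<Rightarrow> 'g \<Rightarrow> bool" where
  "commute G d e \<longleftrightarrow> d \<otimes>\<^bsub>G\<^esub> e = e \<otimes>\<^bsub>G\<^esub> d"

definition conjg :: "('g, 'b) monoid_scheme \<Rightarrow> 'g \<Rightarrow> 'g \<Rightarrow> 'g" where
  "conjg G d e = inv\<^bsub>G\<^esub> e \<otimes>\<^bsub>G\<^esub> d \<otimes>\<^bsub>G\<^esub> e"

definition fischer_lines :: "('g, 'b) monoid_scheme \<Rightarrow> 'g set \<Rightarrow> 'g set set" where
  "fischer_lines G D = {{d, e, conjg G d e} | d e. d \<in> D \<and> e \<in> D \<and> \<not> commute G d e}"

definition collinear_adj :: "('g, 'b) monoid_scheme \<Rightarrow> 'g set \<Rightarrow> 'g \<Rightarrow> 'g \<Rightarrow> bool" where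
  "collinear_adj G D d e \<longleftrightarrow> d \<in> D \<and> e \<in> D \<and> d \<noteq> e \<and>
     (\<exists>L \<in> fischer_lines G D. d \<in> L \<and> e \<in> L)"

definition adj_matrix :: "('g, 'b) monoid_scheme \<Rightarrow> 'g set \<Rightarrow> 'g \<Rightarrow> 'g \<Rightarrow> bit" where
  "adj_matrix G D d e = (if collinear_adj G D d e then 1 else 0)"

definition f2scale :: "bit \<Rightarrow> ('g \<Rightarrow> bit) \<Rightarrow> ('g \<Rightarrow> bit)" where
  "f2scale c f = (\<lambda>x. c * f x)"

lemma vector_space_f2scale: "vector_space f2scale"
  by unfold_locales (auto simp: f2scale_def algebra_simps fun_eq_iff)

definition f2_rank :: "'g set \<Rightarrow> ('g \<Rightarrow> 'g \<Rightarrow> bit) \<Rightarrow> nat" where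
  "f2_rank D M = vector_space.dim f2scale
     ((\<lambda>e. (\<lambda>d. if d \<in> D then M d e else 0)) ` D)"

text \<open>A(D): F_2-space with basis D, realised as functions D \<rightarrow> F_2 (zero outside D);
  the basis vector of d is the indicator of d.\<close>
definition A_space :: "'g set \<Rightarrow> ('g \<Rightarrow> bit) set" where
  "A_space D = {x. \<forall>g. g \<notin> D \<longrightarrow> x g = 0}"

definition basis_vec :: "'g \<Rightarrow> ('g \<Rightarrow> bit)" where
  "basis_vec d = (\<lambda>g. if g = d then 1 else 0)"

definition A_prod :: "('g, 'b) monoid_scheme \<Rightarrow> 'g set \<Rightarrow> ('g \<Rightarrow> bit) \<Rightarrow> ('g \<Rightarrow> bit) \<Rightarrow> ('g \<Rightarrow> bit)" where
  "A_prod G D x y = (\<Sum>d\<in>D. \<Sum>e\<in>D. f2scale (x d * y e)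
      (if commute G d e then 0 else basis_vec d + basis_vec e + basis_vec (conjg G d e)))"

definition A_form :: "('g, 'b) monoid_scheme \<Rightarrow> 'g set \<Rightarrow> ('g \<Rightarrow> bit) \<Rightarrow> ('g \<Rightarrow> bit) \<Rightarrow> bit" where
  "A_form G D x y = (\<Sum>d\<in>D. \<Sum>e\<in>D. x d * y e * (if commute G d e then 0 else 1))"

definition V_radical :: "('g, 'b) monoid_scheme \<Rightarrow> 'g set \<Rightarrow> ('g \<Rightarrow> bit) set" where
  "V_radical G D = {x \<in> A_space D. \<forall>y \<in> A_space D. A_form G D x y = 0}"

definition quotient_dim :: "('g \<Rightarrow> bit) set \<Rightarrow> ('g \<Rightarrow> bit) set \<Rightarrow> nat" where
  "quotient_dim A V = vector_space.dim f2scale A - vector_space.dim f2scale V"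

end

theory Submission
  imports Defs
begin

text \<open>Two points of a Fischer space are collinear exactly when they do not commute: if \<open>d\<close> and
  \<open>e\<close> do not commute then \<open>de\<close> has order 3, whereas \<open>d\<close> commuting with \<open>d\<^sup>e\<close> would give
  \<open>(de)\<^sup>2 = (ed)\<^sup>2 = (de)\<^sup>-\<^sup>2\<close>; so the third point \<open>d\<^sup>e\<close> of their line commutes with neither. Hence the
  adjacency matrix \<open>B\<close> of the collinearity graph is the Gram matrix of the form on the basis \<open>D\<close>,
  the radical \<open>\<V>(D)\<close> is the kernel of \<open>x \<mapsto> x B\<close> on \<open>\<A>(D)\<close>, whose image is the row space of \<open>B\<close>,
  and rank--nullity gives \<open>dim \<A>(D) - dim \<V>(D) = rank B\<close>.\<close>

lemma sum_fun_apply: "(\<Sum>i\<in>S. f i) x = (\<Sum>i\<in>S. f i x)"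
  by (induction S rule: infinite_finite_induct) auto

lemma (in group) involutions_commute_if_commute_conj:
  assumes a: "a \<in> carrier G" and b: "b \<in> carrier G"
    and aa: "a \<otimes> a = \<one>" and bb: "b \<otimes> b = \<one>"
    and ord_ab: "ord (a \<otimes> b) \<in> {1, 2, 3}"
    and comm: "a \<otimes> (b \<otimes> a \<otimes> b) = (b \<otimes> a \<otimes> b) \<otimes> a"
  shows "a \<otimes> b = b \<otimes> a"
proof -
  define x where "x = a \<otimes> b"
  have x: "x \<in> carrier G" using a b by (simp add: x_def)
  have inv_x: "inv x = b \<otimes> a"
    using a b aa bb by (simp add: x_def inv_mult_group inv_equality)
  have "x \<otimes> x = inv x \<otimes> inv x"
    unfolding inv_x using comm a b by (simp add: x_def m_assoc)
  also have "\<dots> = inv (x \<otimes> x)"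
    using x by (simp add: inv_mult_group)
  finally have "(x \<otimes> x) \<otimes> (x \<otimes> x) = \<one>"
    using x by (metis m_closed r_inv)
  then have "x [^] (4::nat) = \<one>"
    using x by (simp add: numeral_eq_Suc m_assoc)
  then have "ord x dvd 2"
    using ord_ab x by (auto simp: pow_eq_id x_def)
  then have "x \<otimes> x = \<one>"
    using x by (simp flip: pow_eq_id add: numeral_2_eq_2)
  then have "inv x = x"
    using x by (simp add: inv_equality)
  then show ?thesis
    using inv_x by (simp add: x_def)
qed

lemma three_transp_class_subset_carrier: "three_transp_class G D \<Longrightarrow> D \<subseteq> carrier G"
  unfolding three_transp_class_def conj_class_def
  by (auto intro!: monoid.m_closed[OF group.is_monoid] group.inv_closed)

lemma collinear_adj_iff_not_commute:
  fixes G (structure)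
  assumes D: "three_transp_class G D"
  shows "collinear_adj G D d e \<longleftrightarrow> d \<in> D \<and> e \<in> D \<and> \<not> commute G d e"
proof
  assume "d \<in> D \<and> e \<in> D \<and> \<not> commute G d e"
  then show "collinear_adj G D d e"
    unfolding collinear_adj_def fischer_lines_def by (auto simp: commute_def)
next
  assume "collinear_adj G D d e"
  then obtain a b where ab: "a \<in> D" "b \<in> D" "\<not> commute G a b"
    and de: "d \<in> D" "e \<in> D" "d \<noteq> e" "d \<in> {a, b, conjg G a b}" "e \<in> {a, b, conjg G a b}"
    unfolding collinear_adj_def fischer_lines_def by blast
  interpret group G
    using D by (simp add: three_transp_class_def)
  have a: "a \<in> carrier G" and b: "b \<in> carrier G"
    using ab three_transp_class_subset_carrier[OF D] by auto
  have aa: "a \<otimes> a = \<one>" and bb: "b \<otimes> b = \<one>" and ord_ab: "ord (a \<otimes> b) \<in> {1, 2, 3}"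
    using D ab by (auto simp: three_transp_class_def)
  define c where "c = b \<otimes> a \<otimes> b"
  have conj_ab: "conjg G a b = c"
    using b bb by (simp add: conjg_def c_def inv_equality)
  have ab_ba: "a \<otimes> b \<noteq> b \<otimes> a"
    using ab(3) by (simp add: commute_def)
  then have "a \<otimes> c \<noteq> c \<otimes> a"
    using involutions_commute_if_commute_conj[OF a b aa bb ord_ab] by (auto simp: c_def)
  moreover have "b \<otimes> c \<noteq> c \<otimes> b"
    using ab_ba a b bb by (simp add: c_def m_assoc flip: m_assoc[of b b])
  ultimately show "d \<in> D \<and> e \<in> D \<and> \<not> commute G d e"
    using de ab_ba unfolding conj_ab commute_def by auto
qed

context Vector_Spaces.linear
begin

lemma dim_image_plus_dim_kernel_le:
  assumes "finite F" and A: "A \<subseteq> vs1.span F"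
  shows "vs2.dim (f ` A) + vs1.dim {x \<in> A. f x = 0} \<le> vs1.dim A"
proof -
  define K where "K = {x \<in> A. f x = 0}"
  obtain BK where BK: "BK \<subseteq> K" "vs1.independent BK" "card BK = vs1.dim K"
    using vs1.basis_exists[of K] by metis
  obtain C where C: "BK \<subseteq> C" "C \<subseteq> A" "vs1.independent C" "A \<subseteq> vs1.span C"
    using vs1.maximal_independent_subset_extend[of BK A] BK K_def by blast
  have "finite C"
    using vs1.independent_span_bound[OF \<open>finite F\<close> C(3)] C(2) A by blast
  have "f ` A \<subseteq> vs2.span (f ` C)"
    using C(4) by (auto simp: span_image)
  also have "\<dots> \<subseteq> vs2.span (insert 0 (f ` (C - BK)))"
    using BK(1) by (intro vs2.span_mono) (auto simp: K_def)
  also have "\<dots> = vs2.span (f ` (C - BK))"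
    by simp
  finally have "vs2.dim (f ` A) \<le> card (f ` (C - BK))"
    using \<open>finite C\<close> vs2.dim_le_card by blast
  also have "\<dots> \<le> card (C - BK)"
    using \<open>finite C\<close> by (simp add: card_image_le)
  also have "\<dots> = card C - card BK"
    using \<open>finite C\<close> C(1) by (simp add: card_Diff_subset finite_subset)
  finally show ?thesis
    using vs1.basis_card_eq_dim[OF C(2,4,3)] card_mono[OF \<open>finite C\<close> C(1)] BK(3)
    by (simp add: K_def)
qed

lemma dim_le_dim_image_plus_dim_kernel:
  assumes "vs1.subspace A" "finite F" "A \<subseteq> vs1.span F"
  shows "vs1.dim A \<le> vs2.dim (f ` A) + vs1.dim {x \<in> A. f x = 0}"
proof -
  define K where "K = {x \<in> A. f x = 0}"
  obtain BK where BK: "BK \<subseteq> K" "vs1.independent BK" "K \<subseteq> vs1.span BK" "card BK = vs1.dim K"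
    using vs1.basis_exists[of K] by metis
  obtain BT where BT: "BT \<subseteq> f ` A" "vs2.independent BT" "f ` A \<subseteq> vs2.span BT"
    "card BT = vs2.dim (f ` A)"
    using vs2.basis_exists[of "f ` A"] by metis
  have "finite BK"
    using vs1.independent_span_bound[OF \<open>finite F\<close> BK(2)] BK(1) assms(3) K_def by blast
  have "f ` A \<subseteq> vs2.span (f ` F)"
    using assms(3) by (auto simp: span_image)
  then have "finite BT"
    using vs2.independent_span_bound[OF _ BT(2)] \<open>finite F\<close> BT(1) by blast
  obtain P where P: "P \<subseteq> A" "inj_on f P" "f ` P = BT"
    using BT(1) subset_image_inj by metis
  have "finite P" "card P = card BT"
    using P(2,3) \<open>finite BT\<close> by (auto simp: card_image dest: finite_imageD)
  have "A \<subseteq> vs1.span (P \<union> BK)"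
  proof
    fix x assume x: "x \<in> A"
    then have "f x \<in> f ` vs1.span P"
      using BT(3) P(3) by (auto simp flip: span_image)
    then obtain q where q: "q \<in> vs1.span P" "f q = f x"
      by auto
    have "q \<in> A"
      using q(1) P(1) assms(1) vs1.span_minimal by blast
    then have "x - q \<in> K"
      using x q(2) assms(1) by (simp add: K_def vs1.subspace_diff diff)
    then have "q + (x - q) \<in> vs1.span (P \<union> BK)"
      using q(1) BK(3) vs1.span_mono[of P "P \<union> BK"] vs1.span_mono[of BK "P \<union> BK"]
      by (intro vs1.span_add) auto
    then show "x \<in> vs1.span (P \<union> BK)"
      by simp
  qed
  then have "vs1.dim A \<le> card (P \<union> BK)"
    using \<open>finite BK\<close> \<open>finite P\<close> by (intro vs1.dim_le_card) auto
  also have "\<dots> \<le> card P + card BK"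
    by (rule card_Un_le)
  finally show ?thesis
    using \<open>card P = card BT\<close> BT(4) BK(4) by (simp add: K_def)
qed

theorem dim_image_plus_dim_kernel:
  assumes "vs1.subspace A" "finite F" "A \<subseteq> vs1.span F"
  shows "vs2.dim (f ` A) + vs1.dim {x \<in> A. f x = 0} = vs1.dim A"
  using dim_image_plus_dim_kernel_le dim_le_dim_image_plus_dim_kernel assms
  by (meson le_antisym)

end

interpretation F2: vector_space f2scale
  by (rule vector_space_f2scale)

lemma subspace_A_space: "F2.subspace (A_space D)"
  unfolding F2.subspace_def A_space_def f2scale_def by auto

lemma A_space_subset_span_basis_vec:
  assumes "finite D"
  shows "A_space D \<subseteq> F2.span (basis_vec ` D)"
proof
  fix x assume x: "x \<in> A_space D"
  have "x = (\<Sum>d\<in>D. f2scale (x d) (basis_vec d))"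
    using x assms
    by (auto simp: fun_eq_iff sum_fun_apply f2scale_def basis_vec_def A_space_def if_distrib
        cong: if_cong)
  also have "\<dots> \<in> F2.span (basis_vec ` D)"
    by (intro F2.span_sum F2.span_scale F2.span_base) auto
  finally show "x \<in> F2.span (basis_vec ` D)" .
qed

definition noncommuting_row :: "('g, 'b) monoid_scheme \<Rightarrow> 'g set \<Rightarrow> 'g \<Rightarrow> 'g \<Rightarrow> bit" where
  "noncommuting_row G D d = (\<lambda>e. if e \<in> D \<and> \<not> commute G d e then 1 else 0)"

definition form_map :: "('g, 'b) monoid_scheme \<Rightarrow> 'g set \<Rightarrow> ('g \<Rightarrow> bit) \<Rightarrow> 'g \<Rightarrow> bit" where
  "form_map G D x = (\<Sum>d\<in>D. f2scale (x d) (noncommuting_row G D d))"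

lemma linear_form_map:
  fixes G :: "('g, 'b) monoid_scheme" and D :: "'g set"
  shows "Vector_Spaces.linear f2scale f2scale (form_map G D)"
proof (unfold Vector_Spaces.linear_iff, intro conjI allI vector_space_f2scale)
  fix x y :: "'g \<Rightarrow> bit"
  show "form_map G D (x + y) = form_map G D x + form_map G D y"
    by (simp only: form_map_def plus_fun_apply F2.scale_left_distrib sum.distrib)
next
  fix c and x :: "'g \<Rightarrow> bit"
  show "form_map G D (f2scale c x) = f2scale c (form_map G D x)"
    by (simp only: form_map_def F2.scale_sum_right F2.scale_scale f2scale_def[of c x])
qed

lemma form_map_apply:
  assumes "e \<in> D"
  shows "form_map G D x e = (\<Sum>d\<in>D. x d * (if commute G d e then 0 else 1))"
  using assms unfolding form_map_def noncommuting_row_def f2scale_def sum_fun_apply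
  by (intro sum.cong refl) auto

lemma form_map_basis_vec:
  assumes "finite D" "d \<in> D"
  shows "form_map G D (basis_vec d) = noncommuting_row G D d"
proof -
  have "form_map G D (basis_vec d) = (\<Sum>d'\<in>D. if d' = d then noncommuting_row G D d' else 0)"
    unfolding form_map_def basis_vec_def by (intro sum.cong refl) auto
  then show ?thesis
    using assms by simp
qed

lemma form_map_image_A_space:
  assumes "finite D"
  shows "form_map G D ` A_space D = F2.span (noncommuting_row G D ` D)"
proof
  show "form_map G D ` A_space D \<subseteq> F2.span (noncommuting_row G D ` D)"
    unfolding form_map_def by (intro image_subsetI F2.span_sum F2.span_scale F2.span_base) auto
  have "noncommuting_row G D d \<in> form_map G D ` A_space D" if "d \<in> D" for d
  proof
    show "noncommuting_row G D d = form_map G D (basis_vec d)"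
      using assms that by (simp add: form_map_basis_vec)
    show "basis_vec d \<in> A_space D"
      using that by (simp add: A_space_def basis_vec_def)
  qed
  moreover have "F2.subspace (form_map G D ` A_space D)"
    by (rule module_hom.subspace_image[OF linear_form_map[folded module_hom_iff_linear]
          subspace_A_space])
  ultimately show "F2.span (noncommuting_row G D ` D) \<subseteq> form_map G D ` A_space D"
    by (intro F2.span_minimal) auto
qed

lemma A_form_eq_sum_form_map: "A_form G D x y = (\<Sum>e\<in>D. form_map G D x e * y e)"
proof -
  have "A_form G D x y = (\<Sum>e\<in>D. \<Sum>d\<in>D. x d * (if commute G d e then 0 else 1) * y e)"
    unfolding A_form_def by (subst sum.swap) (simp only: ac_simps)
  also have "\<dots> = (\<Sum>e\<in>D. form_map G D x e * y e)"
    by (intro sum.cong refl) (simp only: form_map_apply sum_distrib_right)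
  finally show ?thesis .
qed

lemma V_radical_eq_kernel_form_map:
  assumes "finite D"
  shows "V_radical G D = {x \<in> A_space D. form_map G D x = 0}"
proof (intro equalityI subsetI)
  fix x assume x: "x \<in> V_radical G D"
  have "form_map G D x e = 0" for e
  proof (cases "e \<in> D")
    case True
    have "A_form G D x (basis_vec e) = (\<Sum>e'\<in>D. if e' = e then form_map G D x e' else 0)"
      unfolding A_form_eq_sum_form_map basis_vec_def by (intro sum.cong refl) auto
    then have "form_map G D x e = A_form G D x (basis_vec e)"
      using assms True by simp
    also have "\<dots> = 0"
      using x True by (auto simp: V_radical_def A_space_def basis_vec_def)
    finally show ?thesis .
  qed (simp add: form_map_def sum_fun_apply noncommuting_row_def f2scale_def)
  then show "x \<in> {x \<in> A_space D. form_map G D x = 0}"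
    using x by (auto simp: V_radical_def)
qed (simp add: V_radical_def A_form_eq_sum_form_map)

lemma f2_rank_adj_matrix:
  assumes "three_transp_class G D"
  shows "f2_rank D (adj_matrix G D) = F2.dim (noncommuting_row G D ` D)"
proof -
  have "(\<lambda>d. if d \<in> D then adj_matrix G D d e else 0) = noncommuting_row G D e" if "e \<in> D" for e
    using that collinear_adj_iff_not_commute[OF assms]
    by (auto simp: fun_eq_iff adj_matrix_def noncommuting_row_def commute_def)
  then show ?thesis
    by (simp add: f2_rank_def)
qed

theorem proposition6p1:
  fixes G :: "('g, 'b) monoid_scheme" and D :: "'g set"
  assumes "three_transp_class G D"
    and "finite D"
  shows "quotient_dim (A_space D) (V_radical G D) = f2_rank D (adj_matrix G D)"
proof -
  interpret form: Vector_Spaces.linear f2scale f2scale "form_map G D"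
    by (rule linear_form_map)
  have "F2.dim (form_map G D ` A_space D) + F2.dim (V_radical G D) = F2.dim (A_space D)"
    unfolding V_radical_eq_kernel_form_map[OF \<open>finite D\<close>]
    using subspace_A_space A_space_subset_span_basis_vec[OF \<open>finite D\<close>] \<open>finite D\<close>
    by (intro form.dim_image_plus_dim_kernel) auto
  then show ?thesis
    by (simp add: quotient_dim_def f2_rank_adj_matrix[OF \<open>three_transp_class G D\<close>]
        form_map_image_A_space[OF \<open>finite D\<close>])
qed

end
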